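(* Let $\mathcal{H}$ be a complex Hilbert space. For a density matrix $\rho$ on $\mathcal{H}$ and a projection $\hat P$ on $\mathcal{H}$, define the truth value $\nu(\hat P;\rho)$ by assigning to each pair $(V,r)$ with $V\in\mathcal{V}(\mathcal{H})$, $r\in(0,1]$ the set $$\nu(\hat P;\rho)(V,r):=\{(V',r')\mid V'\subseteq V,\ 0<r'\leq r,\ \mathrm{tr}(\rho\,\delta(\hat P)_{V'})\geq r'\}.$$ Then these truth values separate density matrices: if $\rho_1,\rho_2$ are density matrices with $\nu(\hat P;\rho_1)=\nu(\hat P;\rho_2)$ for every projection $\hat P$ on $\mathcal{H}$, then $\rho_1=\rho_2$.
   Context: $\mathcal{V}(\mathcal{H})$ is the set of non-trivial commutative von Neumann subalgebras of $B(\mathcal{H})$ containing the identity operator, ordered by inclusion. For $V'\in\mathcal{V}(\mathcal{H})$ and a projection $\hat P$, $\delta(\hat P)_{V'}:=\bigwedge\{\hat Q\mid\hat Q\text{ a projection in }V',\ \hat Q\geq\hat P\}$ (the smallest projection in $V'$ dominating $\hat P$). A density matrix is a positive trace-class operator of trace one. (These $\nu(\hat P;\rho)$ are the truth values, in the sheaf topos over $\mathcal{V}(\mathcal{H})_A\times(0,1)_L$, of the proposition represented by $\hat P$ in the state $\rho$.) *)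

theory Defs
  imports "HOL-Analysis.Analysis"
begin

text \<open>Every complex Hilbert space is unitarily isomorphic to ell2(I) for some index
set I (its Hilbert dimension); we model H as ell2 over an arbitrary type 'i.\<close>

typedef 'i ell2 = "{f :: 'i \<Rightarrow> complex. (\<lambda>i. (cmod (f i))\<^sup>2) summable_on UNIV}"
  by (rule exI[of _ "\<lambda>_. 0"]) simp

definition ell2_plus :: "'i ell2 \<Rightarrow> 'i ell2 \<Rightarrow> 'i ell2" where
  "ell2_plus x y = Abs_ell2 (\<lambda>i. Rep_ell2 x i + Rep_ell2 y i)"

definition ell2_scale :: "complex \<Rightarrow> 'i ell2 \<Rightarrow> 'i ell2" where
  "ell2_scale c x = Abs_ell2 (\<lambda>i. c * Rep_ell2 x i)"

definition ell2_inner :: "'i ell2 \<Rightarrow> 'i ell2 \<Rightarrow> complex" where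
  "ell2_inner x y = (\<Sum>\<^sub>\<infinity>i. cnj (Rep_ell2 x i) * Rep_ell2 y i)"

definition ell2_norm :: "'i ell2 \<Rightarrow> real" where
  "ell2_norm x = sqrt (Re (ell2_inner x x))"

definition ket :: "'i \<Rightarrow> 'i ell2" where
  "ket i = Abs_ell2 (\<lambda>j. if j = i then 1 else 0)"

definition bounded_op :: "('i ell2 \<Rightarrow> 'i ell2) \<Rightarrow> bool" where
  "bounded_op A \<longleftrightarrow>
     (\<forall>x y. A (ell2_plus x y) = ell2_plus (A x) (A y)) \<and>
     (\<forall>c x. A (ell2_scale c x) = ell2_scale c (A x)) \<and>
     (\<exists>K. \<forall>x. ell2_norm (A x) \<le> K * ell2_norm x)"

definition is_adjoint :: "('i ell2 \<Rightarrow> 'i ell2) \<Rightarrow> ('i ell2 \<Rightarrow> 'i ell2) \<Rightarrow> bool" where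
  "is_adjoint B A \<longleftrightarrow> (\<forall>x y. ell2_inner (B x) y = ell2_inner x (A y))"

definition is_projection :: "('i ell2 \<Rightarrow> 'i ell2) \<Rightarrow> bool" where
  "is_projection P \<longleftrightarrow> bounded_op P \<and> P \<circ> P = P \<and> is_adjoint P P"

definition proj_le :: "('i ell2 \<Rightarrow> 'i ell2) \<Rightarrow> ('i ell2 \<Rightarrow> 'i ell2) \<Rightarrow> bool" where
  "proj_le P Q \<longleftrightarrow> Q \<circ> P = P"

text \<open>Trace w.r.t. the standard basis (for trace-class operators the sum converges
absolutely and is basis independent).\<close>
definition trace :: "('i ell2 \<Rightarrow> 'i ell2) \<Rightarrow> complex" where
  "trace A = (\<Sum>\<^sub>\<infinity>i. ell2_inner (ket i) (A (ket i)))"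

text \<open>Density matrix: positive trace-class operator of trace one. For a positive
operator, being trace class means the diagonal sum is finite.\<close>
definition density_matrix :: "('i ell2 \<Rightarrow> 'i ell2) \<Rightarrow> bool" where
  "density_matrix \<rho> \<longleftrightarrow>
     bounded_op \<rho> \<and>
     (\<forall>x. ell2_inner x (\<rho> x) \<in> \<real> \<and> 0 \<le> Re (ell2_inner x (\<rho> x))) \<and>
     ((\<lambda>i. ell2_inner (ket i) (\<rho> (ket i))) has_sum 1) UNIV"

definition commutant :: "('i ell2 \<Rightarrow> 'i ell2) set \<Rightarrow> ('i ell2 \<Rightarrow> 'i ell2) set" where
  "commutant S = {A. bounded_op A \<and> (\<forall>B\<in>S. A \<circ> B = B \<circ> A)}"

text \<open>Von Neumann algebra: a self-adjoint set of bounded operators equal to its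
double commutant (equivalently, by the bicommutant theorem, a weakly closed
unital *-subalgebra of B(H)).\<close>
definition von_neumann_algebra :: "('i ell2 \<Rightarrow> 'i ell2) set \<Rightarrow> bool" where
  "von_neumann_algebra V \<longleftrightarrow>
     V \<subseteq> {A. bounded_op A} \<and>
     (\<forall>A\<in>V. \<exists>B\<in>V. is_adjoint B A) \<and>
     commutant (commutant V) = V"

definition scalar_ops :: "('i ell2 \<Rightarrow> 'i ell2) set" where
  "scalar_ops = {(\<lambda>x. ell2_scale c x) | c. True}"

text \<open>V(H): non-trivial commutative von Neumann subalgebras containing the identity.\<close>
definition contexts :: "('i ell2 \<Rightarrow> 'i ell2) set set" where
  "contexts = {V. von_neumann_algebra V \<and> id \<in> V \<and> V \<noteq> scalar_ops \<and>
                  (\<forall>A\<in>V. \<forall>B\<in>V. A \<circ> B = B \<circ> A)}"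

text \<open>delta(P)_V: smallest projection in V dominating P.\<close>
definition daseinisation ::
  "('i ell2 \<Rightarrow> 'i ell2) \<Rightarrow> ('i ell2 \<Rightarrow> 'i ell2) set \<Rightarrow> ('i ell2 \<Rightarrow> 'i ell2)" where
  "daseinisation P V = (THE Q. Q \<in> V \<and> is_projection Q \<and> proj_le P Q \<and>
      (\<forall>Q'\<in>V. is_projection Q' \<and> proj_le P Q' \<longrightarrow> proj_le Q Q'))"

definition truth_value ::
  "('i ell2 \<Rightarrow> 'i ell2) \<Rightarrow> ('i ell2 \<Rightarrow> 'i ell2) \<Rightarrow>
   ('i ell2 \<Rightarrow> 'i ell2) set \<times> real \<Rightarrow> (('i ell2 \<Rightarrow> 'i ell2) set \<times> real) set" where
  "truth_value P \<rho> = (\<lambda>(V, r). {(V', r'). V' \<in> contexts \<and> V' \<subseteq> V \<and> 0 < r' \<and> r' \<le> r \<and>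
       Re (trace (\<rho> \<circ> daseinisation P V')) \<ge> r'})"

end

theory Submission imports Defs begin

text \<open>For a unit vector \<open>x\<close> let \<open>P\<close> be the projection onto \<open>\<complex>x\<close>. If the Hilbert space has
dimension at least two, the algebra \<open>{a P + b (1 - P)}\<close> is a context, \<open>P\<close> is its own
daseinisation there, and \<open>tr(\<rho> P) = \<langle>x, \<rho> x\<rangle> \<in> [0, 1]\<close>. The truth value of \<open>P\<close> at the stage
\<open>(\<open>{a P + b (1 - P)}\<close>, 1)\<close> therefore records this number, so equal truth values give equal
expectation values \<open>\<langle>x, \<rho> x\<rangle>\<close> on all unit vectors, and by polarization equal operators.
In dimension one there is only one density matrix.\<close>

section \<open>The Hilbert space structure of \<open>ell2\<close>\<close>

lemma summable_square_norm_Rep_ell2: "(\<lambda>i. (cmod (Rep_ell2 x i))\<^sup>2) summable_on UNIV"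
  using Rep_ell2[of x] by simp

lemma square_sum_le: "(a + b)\<^sup>2 \<le> 2 * a\<^sup>2 + 2 * (b::real)\<^sup>2"
proof -
  have "2 * a\<^sup>2 + 2 * b\<^sup>2 - (a + b)\<^sup>2 = (a - b)\<^sup>2" by (simp add: power2_eq_square algebra_simps)
  then show ?thesis by (metis diff_ge_0_iff_ge zero_le_power2)
qed

lemma summable_square_norm_add:
  assumes "(\<lambda>i. (cmod (f i))\<^sup>2) summable_on UNIV" "(\<lambda>i. (cmod (g i))\<^sup>2) summable_on UNIV"
  shows "(\<lambda>i. (cmod (f i + g i))\<^sup>2) summable_on UNIV"
proof -
  have "(\<lambda>i. 2 * (cmod (f i))\<^sup>2 + 2 * (cmod (g i))\<^sup>2) summable_on UNIV"
    using assms by (intro summable_on_add summable_on_cmult_right)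
  then have "(\<lambda>i. norm ((cmod (f i + g i))\<^sup>2)) summable_on UNIV"
  proof (rule Infinite_Sum.abs_summable_on_comparison_test')
    fix i
    have "(cmod (f i + g i))\<^sup>2 \<le> (cmod (f i) + cmod (g i))\<^sup>2"
      using norm_triangle_ineq[of "f i" "g i"] by (simp add: power_mono)
    also have "\<dots> \<le> 2 * (cmod (f i))\<^sup>2 + 2 * (cmod (g i))\<^sup>2" by (rule square_sum_le)
    finally show "norm ((cmod (f i + g i))\<^sup>2) \<le> 2 * (cmod (f i))\<^sup>2 + 2 * (cmod (g i))\<^sup>2"
      by simp
  qed
  then show ?thesis by simp
qed

lemma summable_square_norm_scale:
  assumes "(\<lambda>i. (cmod (f i))\<^sup>2) summable_on UNIV"
  shows "(\<lambda>i. (cmod (c * f i))\<^sup>2) summable_on UNIV"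
  using summable_on_cmult_right[OF assms, of "(cmod c)\<^sup>2"] by (simp add: norm_mult power_mult_distrib)

lemma Rep_ell2_plus [simp]: "Rep_ell2 (ell2_plus x y) = (\<lambda>i. Rep_ell2 x i + Rep_ell2 y i)"
  unfolding ell2_plus_def
  by (rule Abs_ell2_inverse) (simp add: summable_square_norm_add summable_square_norm_Rep_ell2)

lemma Rep_ell2_scale [simp]: "Rep_ell2 (ell2_scale c x) = (\<lambda>i. c * Rep_ell2 x i)"
  unfolding ell2_scale_def
  by (rule Abs_ell2_inverse) (simp add: summable_square_norm_scale summable_square_norm_Rep_ell2)

lemma Rep_ell2_ket [simp]: "Rep_ell2 (ket j) = (\<lambda>i. if i = j then 1 else 0)"
proof -
  have "(\<lambda>i. (cmod (if i = j then (1::complex) else 0))\<^sup>2) summable_on {j}" by simp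
  then have "(\<lambda>i. (cmod (if i = j then (1::complex) else 0))\<^sup>2) summable_on UNIV"
    by (rule summable_on_cong_neutral[THEN iffD1, rotated -1]) auto
  then show ?thesis unfolding ket_def by (intro Abs_ell2_inverse) simp
qed

lemma ell2_eqI: "(\<And>i. Rep_ell2 x i = Rep_ell2 y i) \<Longrightarrow> x = y"
  by (simp add: Rep_ell2_inject[symmetric] fun_eq_iff)

lemma ell2_scale_one [simp]: "ell2_scale 1 x = x"
  by (rule ell2_eqI) simp

lemma summable_ell2_inner_terms: "(\<lambda>i. cnj (Rep_ell2 x i) * Rep_ell2 y i) summable_on UNIV"
proof -
  have "(\<lambda>i. (cmod (Rep_ell2 x i))\<^sup>2 + (cmod (Rep_ell2 y i))\<^sup>2) summable_on UNIV"
    by (intro summable_on_add summable_square_norm_Rep_ell2)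
  then have "(\<lambda>i. norm (cnj (Rep_ell2 x i) * Rep_ell2 y i)) summable_on UNIV"
  proof (rule Infinite_Sum.abs_summable_on_comparison_test')
    fix i
    have "a * b \<le> a\<^sup>2 + b\<^sup>2" if "0 \<le> a" "0 \<le> b" for a b :: real
      using square_sum_le[of a b] mult_nonneg_nonneg[OF that]
      by (simp add: power2_eq_square algebra_simps)
    then show "norm (cnj (Rep_ell2 x i) * Rep_ell2 y i) \<le> (cmod (Rep_ell2 x i))\<^sup>2 + (cmod (Rep_ell2 y i))\<^sup>2"
      by (simp add: norm_mult)
  qed
  then show ?thesis by (rule abs_summable_summable)
qed

lemma ell2_inner_plus_right: "ell2_inner x (ell2_plus y z) = ell2_inner x y + ell2_inner x z"
  unfolding ell2_inner_def by (simp add: distrib_left infsum_add summable_ell2_inner_terms)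

lemma ell2_inner_scale_right: "ell2_inner x (ell2_scale c y) = c * ell2_inner x y"
  unfolding ell2_inner_def
  by (simp add: mult.left_commute infsum_cmult_right summable_ell2_inner_terms)

lemma ell2_inner_commute: "ell2_inner y x = cnj (ell2_inner x y)"
  unfolding ell2_inner_def infsum_cnj[symmetric] by (simp add: mult.commute)

lemma ell2_inner_plus_left: "ell2_inner (ell2_plus y z) x = ell2_inner y x + ell2_inner z x"
  by (metis ell2_inner_commute ell2_inner_plus_right complex_cnj_add)

lemma ell2_inner_scale_left: "ell2_inner (ell2_scale c y) x = cnj c * ell2_inner y x"
  by (metis ell2_inner_commute ell2_inner_scale_right complex_cnj_mult)

lemmas ell2_inner_simps =
  ell2_inner_plus_right ell2_inner_scale_right ell2_inner_plus_left ell2_inner_scale_left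

lemma ell2_inner_ket_left [simp]: "ell2_inner (ket j) y = Rep_ell2 y j"
proof -
  have "ell2_inner (ket j) y = infsum (\<lambda>i. cnj (Rep_ell2 (ket j) i) * Rep_ell2 y i) {j}"
    unfolding ell2_inner_def by (rule infsum_cong_neutral) auto
  then show ?thesis by simp
qed

lemma ell2_inner_ket_right [simp]: "ell2_inner y (ket j) = cnj (Rep_ell2 y j)"
  using ell2_inner_commute[of "ket j" y] by simp

abbreviation ell2_sqnorm :: "'i ell2 \<Rightarrow> real" where
  "ell2_sqnorm x \<equiv> Re (ell2_inner x x)"

lemma ell2_sqnorm_eq_infsum: "ell2_sqnorm x = (\<Sum>\<^sub>\<infinity>i. (cmod (Rep_ell2 x i))\<^sup>2)"
proof -
  have "ell2_sqnorm x = (\<Sum>\<^sub>\<infinity>i. Re (cnj (Rep_ell2 x i) * Rep_ell2 x i))"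
    unfolding ell2_inner_def by (rule infsum_Re[OF summable_ell2_inner_terms, symmetric])
  also have "\<dots> = (\<Sum>\<^sub>\<infinity>i. (cmod (Rep_ell2 x i))\<^sup>2)"
    by (rule infsum_cong) (metis Re_complex_of_real complex_norm_square mult.commute)
  finally show ?thesis .
qed

lemma ell2_sqnorm_nonneg: "0 \<le> ell2_sqnorm x"
  unfolding ell2_sqnorm_eq_infsum by (rule infsum_nonneg) simp

lemma ell2_inner_self_real: "ell2_inner x x = complex_of_real (ell2_sqnorm x)"
  using ell2_inner_commute[of x x] by (simp add: complex_eq_iff)

lemma Rep_ell2_eq_0_if_sqnorm_eq_0: "ell2_sqnorm x = 0 \<Longrightarrow> Rep_ell2 x i = 0"
  using nonneg_infsum_le_0D[OF _ summable_square_norm_Rep_ell2, of x i]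
  by (simp add: ell2_sqnorm_eq_infsum)

lemma ell2_sqnorm_scale: "ell2_sqnorm (ell2_scale c x) = (cmod c)\<^sup>2 * ell2_sqnorm x"
proof -
  have "c * cnj c = complex_of_real ((cmod c)\<^sup>2)"
    by (metis complex_norm_square of_real_power)
  then have "ell2_inner (ell2_scale c x) (ell2_scale c x) = complex_of_real ((cmod c)\<^sup>2) * ell2_inner x x"
    by (simp only: ell2_inner_scale_left ell2_inner_scale_right mult.assoc[symmetric])
  also have "\<dots> = complex_of_real ((cmod c)\<^sup>2 * ell2_sqnorm x)"
    by (subst ell2_inner_self_real) simp
  finally show ?thesis by simp
qed

section \<open>Linear and positive operators\<close>

definition linear_op :: "('i ell2 \<Rightarrow> 'i ell2) \<Rightarrow> bool" where
  "linear_op A \<longleftrightarrow> (\<forall>x y. A (ell2_plus x y) = ell2_plus (A x) (A y)) \<and>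
     (\<forall>c x. A (ell2_scale c x) = ell2_scale c (A x))"

lemma bounded_op_linear_op: "bounded_op A \<Longrightarrow> linear_op A"
  unfolding bounded_op_def linear_op_def by blast

lemma linear_op_id: "linear_op id"
  by (simp add: linear_op_def)

lemma linear_op_plus: "linear_op A \<Longrightarrow> A (ell2_plus x y) = ell2_plus (A x) (A y)"
  and linear_op_scale: "linear_op A \<Longrightarrow> A (ell2_scale c x) = ell2_scale c (A x)"
  unfolding linear_op_def by blast+

lemma quadratic_form_plus_scale:
  assumes "linear_op A"
  shows "ell2_inner (ell2_plus u (ell2_scale c w)) (A (ell2_plus u (ell2_scale c w)))
     = ell2_inner u (A u) + c * ell2_inner u (A w) + cnj c * ell2_inner w (A u)
       + cnj c * c * ell2_inner w (A w)"
  using assms by (simp add: linear_op_plus linear_op_scale ell2_inner_simps algebra_simps)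

lemma linear_op_eqI_quadratic_form:
  assumes A: "linear_op A" and B: "linear_op B"
    and Q: "\<And>v. ell2_inner v (A v) = ell2_inner v (B v)"
  shows "A = B"
proof -
  have "ell2_inner u (A w) = ell2_inner u (B w)" for u w
  proof -
    have sum: "ell2_inner u (A w) + ell2_inner w (A u) = ell2_inner u (B w) + ell2_inner w (B u)"
      using quadratic_form_plus_scale[OF A, of u 1 w] quadratic_form_plus_scale[OF B, of u 1 w]
        Q[of u] Q[of w] Q[of "ell2_plus u (ell2_scale 1 w)"] by simp
    have "\<i> * (ell2_inner u (A w) - ell2_inner w (A u)) = \<i> * (ell2_inner u (B w) - ell2_inner w (B u))"
      using quadratic_form_plus_scale[OF A, of u \<i> w] quadratic_form_plus_scale[OF B, of u \<i> w]
        Q[of u] Q[of w] Q[of "ell2_plus u (ell2_scale \<i> w)"] by (simp add: algebra_simps)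
    then have "ell2_inner u (A w) - ell2_inner w (A u) = ell2_inner u (B w) - ell2_inner w (B u)"
      by simp
    with sum have "(ell2_inner u (A w) + ell2_inner w (A u)) + (ell2_inner u (A w) - ell2_inner w (A u))
        = (ell2_inner u (B w) + ell2_inner w (B u)) + (ell2_inner u (B w) - ell2_inner w (B u))"
      by simp
    then show ?thesis by simp
  qed
  from this[of "ket _"] show ?thesis
    by (intro ext ell2_eqI) simp
qed

lemma quadratic_form_eqI_unit:
  assumes A: "linear_op A" and B: "linear_op B"
    and U: "\<And>x. ell2_inner x x = 1 \<Longrightarrow> ell2_inner x (A x) = ell2_inner x (B x)"
  shows "ell2_inner v (A v) = ell2_inner v (B v)"
proof (cases "ell2_sqnorm v = 0")
  case True
  have "v = ell2_scale 0 v" by (rule ell2_eqI) (simp add: Rep_ell2_eq_0_if_sqnorm_eq_0[OF True])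
  then have "ell2_inner v (A v) = 0" "ell2_inner v (B v) = 0"
    by (metis ell2_inner_scale_left linear_op_scale A B complex_cnj_zero mult_zero_left)+
  then show ?thesis by simp
next
  case False
  define s where "s = 1 / sqrt (ell2_sqnorm v)"
  have s: "s \<noteq> 0" "s * s * ell2_sqnorm v = 1"
    using False ell2_sqnorm_nonneg[of v] by (simp_all add: s_def)
  define x where "x = ell2_scale (complex_of_real s) v"
  have "ell2_inner x x = complex_of_real (s * s * ell2_sqnorm v)"
    by (simp add: x_def ell2_inner_simps) (subst ell2_inner_self_real, simp)
  then have "complex_of_real (s * s) * ell2_inner v (A v) = complex_of_real (s * s) * ell2_inner v (B v)"
    using U[of x] s by (simp add: x_def linear_op_scale[OF A] linear_op_scale[OF B] ell2_inner_simps)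
  then show ?thesis using s by simp
qed

lemma cauchy_schwarz_from_quadratic:
  fixes a b :: real and z :: complex
  assumes a: "0 \<le> a" and b: "0 \<le> b" and H: "\<And>c. 0 \<le> a + 2 * Re (c * z) + (cmod c)\<^sup>2 * b"
  shows "(cmod z)\<^sup>2 \<le> a * b"
proof (cases "b = 0")
  case True
  show ?thesis
  proof (rule ccontr)
    assume "\<not> ?thesis"
    then have z: "z \<noteq> 0" using True by simp
    define s where "s = (a + 1) / (cmod z)\<^sup>2"
    have "0 \<le> a + 2 * Re (complex_of_real (-s) * cnj z * z)"
      using H[of "complex_of_real (-s) * cnj z"] True by simp
    moreover have "Re (complex_of_real (-s) * cnj z * z) = - (s * (cmod z)\<^sup>2)"
      by (simp add: mult.assoc complex_mult_cnj cmod_power2 del: complex_mult_cnj)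
        (simp add: power2_eq_square)
    moreover have "s * (cmod z)\<^sup>2 = a + 1" using z by (simp add: s_def)
    ultimately show False using a by linarith
  qed
next
  case False
  then have b: "0 < b" using b by simp
  have "0 \<le> a + 2 * Re (complex_of_real (-1/b) * cnj z * z)
      + (cmod (complex_of_real (-1/b) * cnj z))\<^sup>2 * b"
    using H[of "complex_of_real (-1/b) * cnj z"] by simp
  also have "Re (complex_of_real (-1/b) * cnj z * z) = - (cmod z)\<^sup>2 / b"
    using b by (simp add: mult.assoc complex_mult_cnj cmod_power2 del: complex_mult_cnj)
      (simp add: power2_eq_square field_simps)
  also have "(cmod (complex_of_real (-1/b) * cnj z))\<^sup>2 * b = (cmod z)\<^sup>2 / b"
    using b by (simp add: norm_mult norm_divide power_mult_distrib power2_eq_square)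
  finally have "(cmod z)\<^sup>2 / b \<le> a" by simp
  then show ?thesis using b by (simp add: divide_le_eq mult.commute)
qed

definition positive_op :: "('i ell2 \<Rightarrow> 'i ell2) \<Rightarrow> bool" where
  "positive_op A \<longleftrightarrow> linear_op A \<and> (\<forall>x. ell2_inner x (A x) \<in> \<real> \<and> 0 \<le> Re (ell2_inner x (A x)))"

lemma positive_op_id: "positive_op id"
  unfolding positive_op_def using linear_op_id ell2_inner_self_real ell2_sqnorm_nonneg
  by (metis Reals_of_real id_apply)

lemma density_matrix_positive_op: "density_matrix \<rho> \<Longrightarrow> positive_op \<rho>"
  unfolding density_matrix_def positive_op_def using bounded_op_linear_op by blast

lemma density_matrix_linear_op: "density_matrix \<rho> \<Longrightarrow> linear_op \<rho>"
  using density_matrix_positive_op positive_op_def by blast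

lemma positive_op_hermitian:
  assumes "positive_op A"
  shows "ell2_inner w (A u) = cnj (ell2_inner u (A w))"
proof -
  have A: "linear_op A" and R: "\<And>x. Im (ell2_inner x (A x)) = 0"
    using assms unfolding positive_op_def by (auto simp: complex_is_Real_iff)
  have "Im (ell2_inner u (A w) + ell2_inner w (A u)) = 0"
    using arg_cong[OF quadratic_form_plus_scale[OF A, of u 1 w], of Im]
      R[of u] R[of w] R[of "ell2_plus u (ell2_scale 1 w)"] by simp
  moreover have "Re (ell2_inner u (A w) - ell2_inner w (A u)) = 0"
    using arg_cong[OF quadratic_form_plus_scale[OF A, of u \<i> w], of Im]
      R[of u] R[of w] R[of "ell2_plus u (ell2_scale \<i> w)"] by simp
  ultimately show ?thesis by (simp add: complex_eq_iff)
qed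

lemma positive_op_cauchy_schwarz:
  assumes "positive_op A"
  shows "(cmod (ell2_inner u (A w)))\<^sup>2 \<le> Re (ell2_inner u (A u)) * Re (ell2_inner w (A w))"
proof (rule cauchy_schwarz_from_quadratic)
  have A: "linear_op A" and P: "\<And>x. 0 \<le> Re (ell2_inner x (A x))"
    using assms unfolding positive_op_def by auto
  show "0 \<le> Re (ell2_inner u (A u))" "0 \<le> Re (ell2_inner w (A w))" by (rule P)+
  fix c
  have "0 \<le> Re (ell2_inner (ell2_plus u (ell2_scale c w)) (A (ell2_plus u (ell2_scale c w))))"
    by (rule P)
  also have "\<dots> = Re (ell2_inner u (A u)) + 2 * Re (c * ell2_inner u (A w))
      + (cmod c)\<^sup>2 * Re (ell2_inner w (A w))"
    unfolding quadratic_form_plus_scale[OF A] positive_op_hermitian[OF assms, of w u]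
    by (simp add: complex_mult_cnj cmod_power2 del: complex_mult_cnj)
      (simp add: algebra_simps power2_eq_square)
  finally show "0 \<le> Re (ell2_inner u (A u)) + 2 * Re (c * ell2_inner u (A w))
      + (cmod c)\<^sup>2 * Re (ell2_inner w (A w))" .
qed

lemma ell2_inner_cauchy_schwarz: "(cmod (ell2_inner u w))\<^sup>2 \<le> ell2_sqnorm u * ell2_sqnorm w"
  using positive_op_cauchy_schwarz[OF positive_op_id] by simp

lemma ell2_sqnorm_plus_le: "ell2_sqnorm (ell2_plus u w) \<le> 2 * ell2_sqnorm u + 2 * ell2_sqnorm w"
  using ell2_sqnorm_nonneg[of "ell2_plus u (ell2_scale (-1) w)"]
    arg_cong[OF quadratic_form_plus_scale[OF linear_op_id, of u 1 w], of Re]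
    arg_cong[OF quadratic_form_plus_scale[OF linear_op_id, of u "-1" w], of Re]
  by simp

lemma bounded_opI:
  assumes "linear_op A" "0 \<le> K" "\<And>x. ell2_sqnorm (A x) \<le> K * ell2_sqnorm x"
  shows "bounded_op A"
proof -
  have "ell2_norm (A x) \<le> sqrt K * ell2_norm x" for x
    using real_sqrt_le_mono[OF assms(3)[of x]] by (simp add: ell2_norm_def real_sqrt_mult)
  then show ?thesis using assms(1) unfolding bounded_op_def linear_op_def by blast
qed

text \<open>A density matrix has expectation at most \<open>1\<close> in every unit vector \<open>x\<close>: with
\<open>t = \<langle>x, \<rho> x\<rangle>\<close>, Cauchy--Schwarz for \<open>\<rho>\<close> gives \<open>|(\<rho> x)\<^sub>i|\<^sup>2 \<le> \<rho>\<^sub>i\<^sub>i t\<close>, hence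
\<open>\<parallel>\<rho> x\<parallel>\<^sup>2 \<le> t\<close>, while ordinary Cauchy--Schwarz gives \<open>t\<^sup>2 \<le> \<parallel>\<rho> x\<parallel>\<^sup>2\<close>.\<close>

lemma density_matrix_expectation_le_one:
  assumes D: "density_matrix \<rho>" and x: "ell2_inner x x = 1"
  shows "Re (ell2_inner x (\<rho> x)) \<le> 1"
proof -
  have P: "positive_op \<rho>" by (rule density_matrix_positive_op[OF D])
  define t where "t = Re (ell2_inner x (\<rho> x))"
  define d where "d i = Re (ell2_inner (ket i) (\<rho> (ket i)))" for i
  have d: "(d has_sum 1) UNIV"
    using has_sum_Re[where f="\<lambda>i. ell2_inner (ket i) (\<rho> (ket i))" and a=1 and M=UNIV] D
    unfolding density_matrix_def d_def by simp
  have t: "0 \<le> t" using P unfolding positive_op_def t_def by blast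
  have "ell2_sqnorm (\<rho> x) \<le> (\<Sum>\<^sub>\<infinity>i. d i * t)"
    unfolding ell2_sqnorm_eq_infsum
  proof (rule infsum_mono[OF summable_square_norm_Rep_ell2])
    show "(\<lambda>i. d i * t) summable_on UNIV"
      using d by (intro summable_on_cmult_left) (auto simp: summable_on_def)
    show "(cmod (Rep_ell2 (\<rho> x) i))\<^sup>2 \<le> d i * t" for i
      using positive_op_cauchy_schwarz[OF P, of "ket i" x] unfolding d_def t_def by simp
  qed
  also have "(\<Sum>\<^sub>\<infinity>i. d i * t) = t"
    using infsumI[OF has_sum_cmult_left[OF d, of t]] by simp
  finally have "ell2_sqnorm (\<rho> x) \<le> t" .
  moreover have "(cmod (ell2_inner x (\<rho> x)))\<^sup>2 \<le> ell2_sqnorm (\<rho> x)"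
    using ell2_inner_cauchy_schwarz[of x "\<rho> x"] x by simp
  moreover have "t * t \<le> (cmod (ell2_inner x (\<rho> x)))\<^sup>2"
    using t complex_Re_le_cmod[of "ell2_inner x (\<rho> x)"]
    unfolding t_def by (simp add: power2_eq_square mult_mono)
  ultimately have "t * t \<le> t * 1" by simp
  then show ?thesis using t unfolding t_def[symmetric]
    by (cases "t = 0") (simp_all add: mult_le_cancel_left)
qed

lemma density_matrix_unique_if_singleton:
  fixes \<rho>1 \<rho>2 :: "'i ell2 \<Rightarrow> 'i ell2"
  assumes D1: "density_matrix \<rho>1" and D2: "density_matrix \<rho>2" and j: "\<And>k::'i. k = j"
  shows "\<rho>1 = \<rho>2"
proof -
  have eval: "\<rho> v = ell2_scale (Rep_ell2 v j) (ket j)"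
    if D: "density_matrix \<rho>" for \<rho> and v :: "'i ell2"
  proof -
    have "((\<lambda>i. ell2_inner (ket i) (\<rho> (ket i))) has_sum 1) {j}"
      using D j unfolding density_matrix_def by (metis UNIV_eq_I singletonI)
    then have "Rep_ell2 (\<rho> (ket j)) j = 1"
      using has_sum_unique has_sum_finite[of "{j}" "\<lambda>i. ell2_inner (ket i) (\<rho> (ket i))"]
      by fastforce
    then have "\<rho> (ket j) = ket j"
      by (intro ell2_eqI) (metis j Rep_ell2_ket)
    moreover have "v = ell2_scale (Rep_ell2 v j) (ket j)"
      by (rule ell2_eqI) (metis j Rep_ell2_ket Rep_ell2_scale mult.right_neutral)
    ultimately show ?thesis
      by (metis linear_op_scale density_matrix_linear_op[OF D])
  qed
  show ?thesis using eval[OF D1] eval[OF D2] by (intro ext) simp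
qed

section \<open>One-dimensional projections and the contexts they generate\<close>

definition butterfly :: "'i ell2 \<Rightarrow> 'i ell2 \<Rightarrow> 'i ell2 \<Rightarrow> 'i ell2" where
  "butterfly y z v = ell2_scale (ell2_inner z v) y"

lemma linear_op_butterfly: "linear_op (butterfly y z)"
  unfolding linear_op_def butterfly_def
  by (auto intro!: ell2_eqI simp: ell2_inner_simps algebra_simps)

lemma ell2_sqnorm_butterfly_le:
  "ell2_sqnorm (butterfly y z v) \<le> (ell2_sqnorm z * ell2_sqnorm y) * ell2_sqnorm v"
proof -
  have "ell2_sqnorm (butterfly y z v) = (cmod (ell2_inner z v))\<^sup>2 * ell2_sqnorm y"
    unfolding butterfly_def by (rule ell2_sqnorm_scale)
  also have "\<dots> \<le> (ell2_sqnorm z * ell2_sqnorm v) * ell2_sqnorm y"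
    by (rule mult_right_mono[OF ell2_inner_cauchy_schwarz ell2_sqnorm_nonneg])
  finally show ?thesis by (simp add: algebra_simps)
qed

lemma bounded_op_butterfly: "bounded_op (butterfly y z)"
  by (rule bounded_opI[OF linear_op_butterfly _ ell2_sqnorm_butterfly_le])
    (simp add: ell2_sqnorm_nonneg)

lemma is_projection_butterfly:
  assumes "ell2_inner x x = 1"
  shows "is_projection (butterfly x x)"
  unfolding is_projection_def
proof (intro conjI bounded_op_butterfly)
  show "butterfly x x \<circ> butterfly x x = butterfly x x"
    by (intro ext ell2_eqI) (simp add: butterfly_def ell2_inner_simps assms)
  show "is_adjoint (butterfly x x) (butterfly x x)"
    unfolding is_adjoint_def butterfly_def
    by (simp add: ell2_inner_simps ell2_inner_commute[of x])
qed

lemma trace_comp_butterfly: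
  assumes "linear_op \<rho>"
  shows "trace (\<rho> \<circ> butterfly x x) = ell2_inner x (\<rho> x)"
proof -
  have "trace (\<rho> \<circ> butterfly x x) = (\<Sum>\<^sub>\<infinity>i. cnj (Rep_ell2 x i) * Rep_ell2 (\<rho> x) i)"
    by (simp add: trace_def butterfly_def linear_op_scale[OF assms])
  then show ?thesis by (simp add: ell2_inner_def)
qed

definition proj_combination :: "'i ell2 \<Rightarrow> complex \<Rightarrow> complex \<Rightarrow> 'i ell2 \<Rightarrow> 'i ell2" where
  "proj_combination x a b v = ell2_plus (ell2_scale a (butterfly x x v))
     (ell2_scale b (ell2_plus v (ell2_scale (-1) (butterfly x x v))))"

definition proj_algebra :: "'i ell2 \<Rightarrow> ('i ell2 \<Rightarrow> 'i ell2) set" where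
  "proj_algebra x = {proj_combination x a b | a b. True}"

lemma Rep_ell2_proj_combination:
  "Rep_ell2 (proj_combination x a b v) i
     = a * ell2_inner x v * Rep_ell2 x i + b * (Rep_ell2 v i - ell2_inner x v * Rep_ell2 x i)"
  by (simp add: proj_combination_def butterfly_def)

lemma ell2_inner_proj_combination:
  "ell2_inner y (proj_combination x a b v)
     = a * ell2_inner x v * ell2_inner y x + b * (ell2_inner y v - ell2_inner x v * ell2_inner y x)"
  by (simp add: proj_combination_def butterfly_def ell2_inner_simps algebra_simps)

lemma linear_op_proj_combination: "linear_op (proj_combination x a b)"
  unfolding linear_op_def
  by (auto intro!: ell2_eqI simp: Rep_ell2_proj_combination ell2_inner_simps algebra_simps)

lemma bounded_op_proj_combination:
  assumes x: "ell2_inner x x = 1"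
  shows "bounded_op (proj_combination x a b)"
proof (rule bounded_opI[OF linear_op_proj_combination])
  show "0 \<le> 2 * (cmod a)\<^sup>2 + 8 * (cmod b)\<^sup>2" by simp
  fix v
  have P: "ell2_sqnorm (butterfly x x v) \<le> ell2_sqnorm v"
    using ell2_sqnorm_butterfly_le[of x x v] x by simp
  have Q: "ell2_sqnorm (ell2_plus v (ell2_scale (-1) (butterfly x x v))) \<le> 4 * ell2_sqnorm v"
    using ell2_sqnorm_plus_le[of v "ell2_scale (-1) (butterfly x x v)"] P
    by (simp add: ell2_sqnorm_scale)
  have "ell2_sqnorm (proj_combination x a b v)
      \<le> 2 * ((cmod a)\<^sup>2 * ell2_sqnorm (butterfly x x v))
        + 2 * ((cmod b)\<^sup>2 * ell2_sqnorm (ell2_plus v (ell2_scale (-1) (butterfly x x v))))"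
    unfolding proj_combination_def
    using ell2_sqnorm_plus_le[of "ell2_scale a (butterfly x x v)"
        "ell2_scale b (ell2_plus v (ell2_scale (-1) (butterfly x x v)))"]
    by (simp only: ell2_sqnorm_scale)
  also have "\<dots> \<le> 2 * ((cmod a)\<^sup>2 * ell2_sqnorm v) + 2 * ((cmod b)\<^sup>2 * (4 * ell2_sqnorm v))"
    by (intro add_mono mult_left_mono P Q) simp_all
  finally show "ell2_sqnorm (proj_combination x a b v)
      \<le> (2 * (cmod a)\<^sup>2 + 8 * (cmod b)\<^sup>2) * ell2_sqnorm v"
    by (simp add: algebra_simps)
qed

lemma proj_combination_commute:
  "ell2_inner x x = 1 \<Longrightarrow>
    proj_combination x a b \<circ> proj_combination x c d = proj_combination x c d \<circ> proj_combination x a b"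
  by (intro ext ell2_eqI)
    (simp only: comp_apply Rep_ell2_proj_combination ell2_inner_proj_combination, simp add: algebra_simps)

lemma butterfly_eq_proj_combination: "ell2_inner x x = 1 \<Longrightarrow> butterfly x x = proj_combination x 1 0"
  by (intro ext ell2_eqI) (simp add: Rep_ell2_proj_combination butterfly_def)

lemma id_eq_proj_combination: "id = proj_combination x 1 1"
  by (intro ext ell2_eqI) (simp add: Rep_ell2_proj_combination)

lemma is_adjoint_proj_combination: "is_adjoint (proj_combination x (cnj a) (cnj b)) (proj_combination x a b)"
  unfolding is_adjoint_def proj_combination_def butterfly_def
  by (simp add: ell2_inner_simps ell2_inner_commute[of x] algebra_simps)

lemma butterfly_self_in_commutant_proj_algebra:
  assumes "ell2_inner x x = 1"
  shows "butterfly x x \<in> commutant (proj_algebra x)"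
  unfolding commutant_def proj_algebra_def
  using bounded_op_proj_combination[OF assms] butterfly_eq_proj_combination[OF assms]
    proj_combination_commute[OF assms]
  by auto

lemma butterfly_in_commutant_proj_algebra:
  assumes x: "ell2_inner x x = 1" and "ell2_inner x y = 0" and "ell2_inner x z = 0"
  shows "butterfly y z \<in> commutant (proj_algebra x)"
proof -
  have "ell2_inner z x = 0" using assms(3) ell2_inner_commute[of x z] by simp
  then have "butterfly y z \<circ> proj_combination x a b = proj_combination x a b \<circ> butterfly y z" for a b
    by (intro ext ell2_eqI)
      (simp add: Rep_ell2_proj_combination ell2_inner_proj_combination butterfly_def
        ell2_inner_simps assms(2) algebra_simps)
  then show ?thesis unfolding commutant_def proj_algebra_def using bounded_op_butterfly by auto
qed

lemma proj_combination_in_bicommutant: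
  assumes x: "ell2_inner x x = 1"
  shows "proj_combination x a b \<in> commutant (commutant (proj_algebra x))"
proof -
  have "proj_combination x a b \<circ> A = A \<circ> proj_combination x a b"
    if A: "A \<in> commutant (proj_algebra x)" for A
  proof -
    have "A \<circ> butterfly x x = butterfly x x \<circ> A"
      using A butterfly_eq_proj_combination[OF x] unfolding commutant_def proj_algebra_def by auto
    then have "A (butterfly x x v) = butterfly x x (A v)" for v by (metis comp_apply)
    moreover have "linear_op A" using A unfolding commutant_def by (auto intro: bounded_op_linear_op)
    ultimately show ?thesis
      by (intro ext) (simp add: proj_combination_def linear_op_plus linear_op_scale)
  qed
  then show ?thesis unfolding commutant_def using bounded_op_proj_combination[OF x] by auto
qed

text \<open>An operator commuting with \<open>P\<close> maps \<open>x\<close> into \<open>\<complex>x\<close>; one commuting with all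
\<open>butterfly y y\<^sub>0\<close> for \<open>y, y\<^sub>0 \<bottom> x\<close> acts on \<open>x\<^sup>\<bottom>\<close> by the single scalar \<open>\<langle>y\<^sub>0, B y\<^sub>0\<rangle> / \<langle>y\<^sub>0, y\<^sub>0\<rangle>\<close>.\<close>

lemma bicommutant_subset_proj_algebra:
  assumes x: "ell2_inner x x = 1" and y0: "ell2_inner x y0 = 0" "ell2_inner y0 y0 \<noteq> 0"
    and B: "B \<in> commutant (commutant (proj_algebra x))"
  shows "B \<in> proj_algebra x"
proof -
  have LB: "linear_op B" using B unfolding commutant_def by (auto intro: bounded_op_linear_op)
  have comm: "B (A v) = A (B v)" if "A \<in> commutant (proj_algebra x)" for A v
  proof -
    have "B \<circ> A = A \<circ> B" using B that unfolding commutant_def by auto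
    then show ?thesis by (metis comp_apply)
  qed
  define a where "a = ell2_inner x (B x)"
  define b where "b = ell2_inner y0 (B y0) / ell2_inner y0 y0"
  have "butterfly x x x = x" by (rule ell2_eqI) (simp add: butterfly_def x)
  then have Bx: "B x = ell2_scale a x"
    using comm[OF butterfly_self_in_commutant_proj_algebra[OF x], of x]
    by (simp add: butterfly_def a_def)
  have By: "B y = ell2_scale b y" if y: "ell2_inner x y = 0" for y
  proof -
    have "ell2_scale (ell2_inner y0 y0) (B y) = ell2_scale (ell2_inner y0 (B y0)) y"
      using comm[OF butterfly_in_commutant_proj_algebra[OF x y y0(1)], of y0]
      by (simp add: butterfly_def linear_op_scale[OF LB])
    then have "ell2_inner y0 y0 * Rep_ell2 (B y) i = ell2_inner y0 (B y0) * Rep_ell2 y i" for i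
      by (metis Rep_ell2_scale)
    then show ?thesis
      using y0(2) by (intro ell2_eqI) (simp add: b_def field_simps)
  qed
  have "B v = proj_combination x a b v" for v
  proof -
    define w where "w = ell2_plus v (ell2_scale (-1) (butterfly x x v))"
    have w: "ell2_inner x w = 0" by (simp add: w_def butterfly_def ell2_inner_simps x)
    have "v = ell2_plus (ell2_scale (ell2_inner x v) x) w"
      by (rule ell2_eqI) (simp add: w_def butterfly_def)
    then have "B v = ell2_plus (ell2_scale (ell2_inner x v) (ell2_scale a x)) (ell2_scale b w)"
      by (metis linear_op_plus[OF LB] linear_op_scale[OF LB] Bx By[OF w])
    also have "\<dots> = proj_combination x a b v"
      by (rule ell2_eqI) (simp add: Rep_ell2_proj_combination w_def butterfly_def algebra_simps)
    finally show ?thesis .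
  qed
  then show ?thesis unfolding proj_algebra_def by blast
qed

lemma proj_algebra_in_contexts:
  assumes x: "ell2_inner x x = 1" and y0: "ell2_inner x y0 = 0" "ell2_inner y0 y0 \<noteq> 0"
  shows "proj_algebra x \<in> contexts"
  unfolding contexts_def
proof (intro CollectI conjI)
  show "von_neumann_algebra (proj_algebra x)"
    unfolding von_neumann_algebra_def
    using bounded_op_proj_combination[OF x] is_adjoint_proj_combination
      bicommutant_subset_proj_algebra[OF x y0] proj_combination_in_bicommutant[OF x]
    unfolding proj_algebra_def by blast
  show "id \<in> proj_algebra x" unfolding proj_algebra_def using id_eq_proj_combination by blast
  show "\<forall>A\<in>proj_algebra x. \<forall>B\<in>proj_algebra x. A \<circ> B = B \<circ> A"
    unfolding proj_algebra_def using proj_combination_commute[OF x] by blast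
  show "proj_algebra x \<noteq> scalar_ops"
  proof
    assume "proj_algebra x = scalar_ops"
    then obtain c where c: "butterfly x x = (\<lambda>v. ell2_scale c v)"
      using butterfly_eq_proj_combination[OF x] unfolding scalar_ops_def proj_algebra_def by blast
    have "c = 1" using arg_cong[OF c, of "\<lambda>f. ell2_inner x (f x)"]
      by (simp add: butterfly_def ell2_inner_simps x)
    then show False using arg_cong[OF c, of "\<lambda>f. ell2_inner y0 (f y0)"] y0
      by (simp add: butterfly_def ell2_inner_simps)
  qed
qed

lemma exists_orthogonal_nonzero:
  fixes x :: "'i ell2" and j k :: 'i
  assumes "j \<noteq> k"
  shows "\<exists>y. ell2_inner x y = 0 \<and> ell2_inner y y \<noteq> 0"
proof (cases "Rep_ell2 x j = 0")
  case True
  then show ?thesis by (intro exI[of _ "ket j"]) simp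
next
  case False
  define y where "y = ell2_plus (ell2_scale (cnj (Rep_ell2 x k)) (ket j))
    (ell2_scale (- cnj (Rep_ell2 x j)) (ket k))"
  have "ell2_inner x y = 0" by (simp add: y_def ell2_inner_simps)
  moreover have "ell2_inner y y \<noteq> 0"
  proof
    assume "ell2_inner y y = 0"
    then have "Rep_ell2 y k = 0" by (intro Rep_ell2_eq_0_if_sqnorm_eq_0) simp
    then show False using False assms by (simp add: y_def)
  qed
  ultimately show ?thesis by blast
qed

section \<open>Truth values of one-dimensional projections\<close>

text \<open>Minimality, tested against the candidate \<open>P\<close> itself, gives \<open>P Q = Q\<close>; with \<open>Q P = P\<close>
and self-adjointness, \<open>Q = (P Q)\<^sup>* = Q P = P\<close>.\<close>

lemma daseinisation_butterfly_proj_algebra: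
  assumes x: "ell2_inner x x = 1"
  shows "daseinisation (butterfly x x) (proj_algebra x) = butterfly x x"
  unfolding daseinisation_def
proof (rule the_equality)
  let ?P = "butterfly x x"
  have PV: "?P \<in> proj_algebra x"
    unfolding proj_algebra_def using butterfly_eq_proj_combination[OF x] by blast
  have PP: "is_projection ?P" by (rule is_projection_butterfly[OF x])
  then show "?P \<in> proj_algebra x \<and> is_projection ?P \<and> proj_le ?P ?P \<and>
      (\<forall>Q'\<in>proj_algebra x. is_projection Q' \<and> proj_le ?P Q' \<longrightarrow> proj_le ?P Q')"
    using PV unfolding proj_le_def is_projection_def by blast
  fix Q
  assume Q: "Q \<in> proj_algebra x \<and> is_projection Q \<and> proj_le ?P Q \<and>
      (\<forall>Q'\<in>proj_algebra x. is_projection Q' \<and> proj_le ?P Q' \<longrightarrow> proj_le Q Q')"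
  have QP: "Q (?P v) = ?P v" for v
    using Q unfolding proj_le_def by (metis comp_apply)
  have PQ: "?P (Q v) = Q v" for v
    using Q PV PP unfolding proj_le_def is_projection_def by (metis comp_apply)
  have adjQ: "ell2_inner (Q u) v = ell2_inner u (Q v)" for u v
    using Q unfolding is_projection_def is_adjoint_def by blast
  have adjP: "ell2_inner (?P u) v = ell2_inner u (?P v)" for u v
    using PP unfolding is_projection_def is_adjoint_def by blast
  have "ell2_inner (Q u) v = ell2_inner (?P u) v" for u v
  proof -
    have "ell2_inner (Q u) v = ell2_inner (?P (Q u)) v" by (simp only: PQ)
    also have "\<dots> = ell2_inner u (Q (?P v))" by (simp only: adjP adjQ)
    also have "\<dots> = ell2_inner (?P u) v" by (simp only: QP adjP)
    finally show ?thesis .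
  qed
  from this[of _ "ket _"] show "Q = ?P"
    by (intro ext ell2_eqI) simp
qed

lemma truth_value_butterfly_proj_algebra:
  assumes x: "ell2_inner x x = 1" and V: "proj_algebra x \<in> contexts" and "linear_op \<rho>"
  shows "(proj_algebra x, r) \<in> truth_value (butterfly x x) \<rho> (proj_algebra x, 1)
    \<longleftrightarrow> 0 < r \<and> r \<le> 1 \<and> r \<le> Re (ell2_inner x (\<rho> x))"
  using V by (simp add: truth_value_def daseinisation_butterfly_proj_algebra[OF x]
      trace_comp_butterfly[OF assms(3)])

lemma eq_if_same_lower_bounds_in_unit_interval:
  fixes s t :: real
  assumes "0 \<le> s" "s \<le> 1" "0 \<le> t" "t \<le> 1"
    and "\<And>r. 0 < r \<and> r \<le> 1 \<and> r \<le> s \<longleftrightarrow> 0 < r \<and> r \<le> 1 \<and> r \<le> t"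
  shows "s = t"
  using assms(5)[of s] assms(5)[of t] assms(1-4) by linarith

lemma expectation_eq_if_truth_values_eq:
  assumes D1: "density_matrix \<rho>1" and D2: "density_matrix \<rho>2"
    and x: "ell2_inner x x = 1" and V: "proj_algebra x \<in> contexts"
    and T: "truth_value (butterfly x x) \<rho>1 (proj_algebra x, 1)
          = truth_value (butterfly x x) \<rho>2 (proj_algebra x, 1)"
  shows "ell2_inner x (\<rho>1 x) = ell2_inner x (\<rho>2 x)"
proof -
  have "Re (ell2_inner x (\<rho>1 x)) = Re (ell2_inner x (\<rho>2 x))"
  proof (rule eq_if_same_lower_bounds_in_unit_interval)
    show "0 \<le> Re (ell2_inner x (\<rho>1 x))" "0 \<le> Re (ell2_inner x (\<rho>2 x))"
      using D1 D2 unfolding density_matrix_def by auto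
    show "Re (ell2_inner x (\<rho>1 x)) \<le> 1" "Re (ell2_inner x (\<rho>2 x)) \<le> 1"
      using density_matrix_expectation_le_one[OF _ x] D1 D2 by auto
    show "0 < r \<and> r \<le> 1 \<and> r \<le> Re (ell2_inner x (\<rho>1 x))
        \<longleftrightarrow> 0 < r \<and> r \<le> 1 \<and> r \<le> Re (ell2_inner x (\<rho>2 x))" for r
      using T truth_value_butterfly_proj_algebra[OF x V density_matrix_linear_op[OF D1], of r]
        truth_value_butterfly_proj_algebra[OF x V density_matrix_linear_op[OF D2], of r]
      by simp
  qed
  moreover have "ell2_inner x (\<rho>1 x) \<in> \<real>" "ell2_inner x (\<rho>2 x) \<in> \<real>"
    using D1 D2 unfolding density_matrix_def by auto
  ultimately show ?thesis by (simp add: complex_eq_iff complex_is_Real_iff)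
qed

theorem mainTheorem9:
  fixes \<rho>1 \<rho>2 :: "'i ell2 \<Rightarrow> 'i ell2"
  assumes "density_matrix \<rho>1" and "density_matrix \<rho>2"
    and "\<And>P. is_projection P \<Longrightarrow>
           (\<forall>V\<in>contexts. \<forall>r\<in>{0<..1}. truth_value P \<rho>1 (V, r) = truth_value P \<rho>2 (V, r))"
  shows "\<rho>1 = \<rho>2"
proof (cases "\<exists>j k::'i. j \<noteq> k")
  case True
  then obtain j k :: 'i where jk: "j \<noteq> k" by blast
  have unit: "ell2_inner x (\<rho>1 x) = ell2_inner x (\<rho>2 x)" if x: "ell2_inner x x = 1" for x
  proof -
    obtain y where "ell2_inner x y = 0" "ell2_inner y y \<noteq> 0"
      using exists_orthogonal_nonzero[OF jk] by blast
    then have V: "proj_algebra x \<in> contexts" by (rule proj_algebra_in_contexts[OF x])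
    have "truth_value (butterfly x x) \<rho>1 (proj_algebra x, 1)
        = truth_value (butterfly x x) \<rho>2 (proj_algebra x, 1)"
      using assms(3)[OF is_projection_butterfly[OF x]] V by simp
    then show ?thesis by (rule expectation_eq_if_truth_values_eq[OF assms(1,2) x V])
  qed
  have L1: "linear_op \<rho>1" and L2: "linear_op \<rho>2"
    using assms(1,2) by (simp_all add: density_matrix_linear_op)
  show ?thesis
    by (rule linear_op_eqI_quadratic_form[OF L1 L2 quadratic_form_eqI_unit[OF L1 L2 unit]])
next
  case False
  then show ?thesis using density_matrix_unique_if_singleton[OF assms(1,2)] by blast
qed

end
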